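(* Let $\kappa$ be a regular cardinal and let $A,B$ be meet-semilattices with $A\subseteq B\subseteq \mathcal{BL} A$, where $A$ is identified with $\{{\downarrow}a:a\in A\}$, $A$ is a sub-meet-semilattice of $B$ and $B$ is a sub-meet-semilattice of $\mathcal{BL} A$. The following are equivalent: (1) $B$ is a $\kappa$-frame; (2) $B$ is a sub-$\kappa$-frame of $\mathcal{BL} A$ (i.e., closed under finite meets and under joins of fewer than $\kappa$ elements computed in $\mathcal{BL} A$); (3) the sub-$\kappa$-frame of $\mathcal{BL} A$ generated by $B$ equals $B$.
   Context: A meet-semilattice is a poset with all finite meets. For $S\subseteq A$ with $\bigvee S$ existing in $A$, the join is distributive if $a\wedge\bigvee S=\bigvee\{a\wedge s:s\in S\}$ for all $a\in A$. A D-ideal is a downset $E$ with $\bigvee S\in E$ whenever $S\subseteq E$ has a distributive join; $\mathcal{BL} A$ is the frame of D-ideals of $A$ ordered by inclusion, into which $A$ embeds via $a\mapsto{\downarrow}a$. For a regular cardinal $\kappa$, a $\kappa$-set is a set of cardinality $<\kappa$ and a $\kappa$-join is a join of a $\kappa$-set. A meet-semilattice is $\kappa$-complete if all $\kappa$-joins exist, $\kappa$JD if every existing $\kappa$-join is distributive, and a $\kappa$-frame if it is both $\kappa$-complete and $\kappa$JD. *)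

theory Defs
  imports Main
begin

definition is_join :: "'a::order set \<Rightarrow> 'a \<Rightarrow> bool" where
  "is_join S x \<longleftrightarrow> (\<forall>s\<in>S. s \<le> x) \<and> (\<forall>y. (\<forall>s\<in>S. s \<le> y) \<longrightarrow> x \<le> y)"

definition distributive_join :: "'a::semilattice_inf set \<Rightarrow> 'a \<Rightarrow> bool" where
  "distributive_join S x \<longleftrightarrow> is_join S x \<and> (\<forall>a. is_join ((\<lambda>s. inf a s) ` S) (inf a x))"

definition D_ideal :: "'a::semilattice_inf set \<Rightarrow> bool" where
  "D_ideal E \<longleftrightarrow> (\<forall>x y. x \<in> E \<longrightarrow> y \<le> x \<longrightarrow> y \<in> E)
     \<and> (\<forall>S x. S \<subseteq> E \<longrightarrow> distributive_join S x \<longrightarrow> x \<in> E)"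

text \<open>The frame BL A of D-ideals of A (A = the whole type), ordered by inclusion.\<close>
definition BL :: "'a::semilattice_inf set set" where
  "BL = {E. D_ideal E}"

definition down :: "'a::order \<Rightarrow> 'a set" where
  "down a = {y. y \<le> a}"

definition join_in :: "'x set set \<Rightarrow> 'x set set \<Rightarrow> 'x set \<Rightarrow> bool" where
  "join_in P S X \<longleftrightarrow> X \<in> P \<and> (\<forall>s\<in>S. s \<subseteq> X) \<and> (\<forall>Y\<in>P. (\<forall>s\<in>S. s \<subseteq> Y) \<longrightarrow> X \<subseteq> Y)"

definition kappa_set :: "'c rel \<Rightarrow> 'y set \<Rightarrow> bool" where
  "kappa_set k S \<longleftrightarrow> (card_of S, k) \<in> ordLess"

text \<open>For a family P closed under binary intersection (so binary meet is \<inter>).\<close>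
definition kappa_complete :: "'c rel \<Rightarrow> 'x set set \<Rightarrow> bool" where
  "kappa_complete k P \<longleftrightarrow> (\<forall>S. S \<subseteq> P \<longrightarrow> kappa_set k S \<longrightarrow> (\<exists>X. join_in P S X))"

definition kappa_JD :: "'c rel \<Rightarrow> 'x set set \<Rightarrow> bool" where
  "kappa_JD k P \<longleftrightarrow> (\<forall>S X. S \<subseteq> P \<longrightarrow> kappa_set k S \<longrightarrow> join_in P S X \<longrightarrow>
       (\<forall>a\<in>P. join_in P ((\<lambda>s. a \<inter> s) ` S) (a \<inter> X)))"

definition kappa_frame :: "'c rel \<Rightarrow> 'x set set \<Rightarrow> bool" where
  "kappa_frame k P \<longleftrightarrow> kappa_complete k P \<and> kappa_JD k P"

definition sub_meet_BL :: "'a::semilattice_inf set set \<Rightarrow> bool" where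
  "sub_meet_BL C \<longleftrightarrow> C \<subseteq> BL \<and> UNIV \<in> C \<and> (\<forall>x\<in>C. \<forall>y\<in>C. x \<inter> y \<in> C)"

definition sub_kappa_frame_BL :: "'c rel \<Rightarrow> 'a::semilattice_inf set set \<Rightarrow> bool" where
  "sub_kappa_frame_BL k C \<longleftrightarrow> sub_meet_BL C \<and>
     (\<forall>S X. S \<subseteq> C \<longrightarrow> kappa_set k S \<longrightarrow> join_in BL S X \<longrightarrow> X \<in> C)"

definition generated_sub_kappa_frame :: "'c rel \<Rightarrow> 'a::semilattice_inf set set \<Rightarrow> 'a set set" where
  "generated_sub_kappa_frame k B = \<Inter>{C. B \<subseteq> C \<and> sub_kappa_frame_BL k C}"

end

(*
  BL A is a complete lattice whose joins are intersections of upper bounds, and it is a frame: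
  for a D-ideal a, the elements x with (down x) \<inter> a below the join of the a \<inter> s form a D-ideal
  containing every s.  So a sub-meet-semilattice closed under kappa-joins of BL A inherits the
  frame law.  Conversely, let B be a kappa-frame containing every down w and Y the B-join of
  S \<subseteq> B.  Distributivity of Y over the principal ideals says that every w \<in> Y is the join,
  indeed a distributive join, of the elements of \<Union>S below w; being a D-ideal, the join of S
  in BL A contains w.  Hence joins in B are joins in BL A.  The last equivalence is the
  Moore-closure property: sub-kappa-frames of BL A are closed under intersections.
*)

theory Submission
  imports Defs
begin

lemma D_ideal_downward: "D_ideal E \<Longrightarrow> x \<in> E \<Longrightarrow> y \<le> x \<Longrightarrow> y \<in> E"
  unfolding D_ideal_def by blast

lemma D_ideal_distributive_join: "D_ideal E \<Longrightarrow> S \<subseteq> E \<Longrightarrow> distributive_join S x \<Longrightarrow> x \<in> E"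
  unfolding D_ideal_def by blast

lemma D_ideal_Inter:
  assumes "\<And>E. E \<in> F \<Longrightarrow> D_ideal E"
  shows "D_ideal (\<Inter>F)"
  unfolding D_ideal_def
proof (intro conjI allI impI)
  fix x y assume "x \<in> \<Inter>F" "y \<le> x"
  then show "y \<in> \<Inter>F"
    using assms unfolding D_ideal_def by blast
next
  fix S x assume "S \<subseteq> \<Inter>F" "distributive_join S x"
  then show "x \<in> \<Inter>F"
    using assms unfolding D_ideal_def by blast
qed

lemma Inter_in_BL: "F \<subseteq> BL \<Longrightarrow> \<Inter>F \<in> BL"
  unfolding BL_def by (intro CollectI D_ideal_Inter) blast

lemma UNIV_in_BL: "UNIV \<in> BL"
  using Inter_in_BL[of "{}"] by simp

lemma Int_in_BL: "x \<in> BL \<Longrightarrow> y \<in> BL \<Longrightarrow> x \<inter> y \<in> BL"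
  using Inter_in_BL[of "{x, y}"] by simp

lemma join_in_unique: "join_in P S X \<Longrightarrow> join_in P S Y \<Longrightarrow> X = Y"
  unfolding join_in_def by (meson subset_antisym)

lemma join_in_upper: "join_in P S X \<Longrightarrow> s \<in> S \<Longrightarrow> s \<subseteq> X"
  unfolding join_in_def by blast

lemma join_in_least: "join_in P S X \<Longrightarrow> Y \<in> P \<Longrightarrow> (\<And>s. s \<in> S \<Longrightarrow> s \<subseteq> Y) \<Longrightarrow> X \<subseteq> Y"
  unfolding join_in_def by blast

lemma join_in_subfamily: "C \<subseteq> P \<Longrightarrow> join_in P S X \<Longrightarrow> X \<in> C \<Longrightarrow> join_in C S X"
  unfolding join_in_def by blast

lemma down_subset_down_iff: "down x \<subseteq> down y \<longleftrightarrow> x \<le> y"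
  unfolding down_def by auto

definition BL_Sup :: "'a::semilattice_inf set set \<Rightarrow> 'a set" where
  "BL_Sup S = \<Inter>{Y \<in> BL. \<forall>s\<in>S. s \<subseteq> Y}"

lemma BL_Sup_in_BL: "BL_Sup S \<in> BL"
  unfolding BL_Sup_def by (rule Inter_in_BL) blast

lemma BL_Sup_upper: "s \<in> S \<Longrightarrow> s \<subseteq> BL_Sup S"
  unfolding BL_Sup_def by blast

lemma BL_Sup_least: "Y \<in> BL \<Longrightarrow> (\<And>s. s \<in> S \<Longrightarrow> s \<subseteq> Y) \<Longrightarrow> BL_Sup S \<subseteq> Y"
  unfolding BL_Sup_def by blast

lemma join_in_BL_Sup: "join_in BL S (BL_Sup S)"
  unfolding join_in_def by (simp add: BL_Sup_in_BL BL_Sup_upper BL_Sup_least)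

lemma join_in_BL_iff: "join_in BL S X \<longleftrightarrow> X = BL_Sup S"
  using join_in_BL_Sup join_in_unique by blast

lemma distributive_join_restrict:
  assumes "distributive_join T t" and "y \<le> t"
  shows "distributive_join (inf y ` T) y"
  unfolding distributive_join_def
proof (intro conjI allI)
  have "is_join (inf y ` T) (inf y t)"
    using assms(1) unfolding distributive_join_def by blast
  then show "is_join (inf y ` T) y"
    using assms(2) by (simp add: inf_absorb1)
next
  fix c
  have "is_join (inf (inf c y) ` T) (inf (inf c y) t)"
    using assms(1) unfolding distributive_join_def by blast
  moreover have "inf (inf c y) t = inf c y"
    using assms(2) by (simp add: inf_absorb1 inf_assoc)
  ultimately show "is_join (inf c ` inf y ` T) (inf c y)"
    by (simp add: image_image inf_assoc)
qed

lemma BL_Int_Sup_distrib: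
  assumes a: "a \<in> BL" and S: "S \<subseteq> BL"
  shows "a \<inter> BL_Sup S = BL_Sup ((\<inter>) a ` S)"
proof
  define J where "J = BL_Sup ((\<inter>) a ` S)"
  have J: "D_ideal J"
    using BL_Sup_in_BL unfolding J_def BL_def by blast
  have Da: "D_ideal a"
    using a unfolding BL_def by blast
  \<comment> \<open>E is a D-ideal since distributive joins stay distributive when cut down below
    an element; it contains every member of S, hence also their join\<close>
  define E where "E = {x. down x \<inter> a \<subseteq> J}"
  have "D_ideal E"
    unfolding D_ideal_def
  proof (intro conjI allI impI)
    fix x y assume "x \<in> E" "y \<le> x"
    then have "down y \<subseteq> down x"
      by (simp add: down_subset_down_iff)
    then show "y \<in> E"
      using \<open>x \<in> E\<close> unfolding E_def by blast
  next
    fix T t assume T: "T \<subseteq> E" and t: "distributive_join T t"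
    have "y \<in> J" if "y \<le> t" and "y \<in> a" for y
    proof (rule D_ideal_distributive_join[OF J])
      show "distributive_join (inf y ` T) y"
        using distributive_join_restrict[OF t \<open>y \<le> t\<close>] .
      have "inf y t' \<in> down t' \<inter> a" for t'
        using D_ideal_downward[OF Da \<open>y \<in> a\<close>] unfolding down_def by simp
      then show "inf y ` T \<subseteq> J"
        using T unfolding E_def by blast
    qed
    then show "t \<in> E"
      unfolding E_def down_def by auto
  qed
  moreover have "s \<subseteq> E" if "s \<in> S" for s
  proof
    fix x assume "x \<in> s"
    have "D_ideal s"
      using \<open>s \<in> S\<close> S unfolding BL_def by blast
    then have "down x \<subseteq> s"
      using D_ideal_downward \<open>x \<in> s\<close> unfolding down_def by blast
    moreover have "a \<inter> s \<subseteq> J"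
      unfolding J_def using \<open>s \<in> S\<close> by (intro BL_Sup_upper imageI)
    ultimately show "x \<in> E"
      unfolding E_def by blast
  qed
  ultimately have "BL_Sup S \<subseteq> E"
    by (intro BL_Sup_least) (simp_all add: BL_def)
  then show "a \<inter> BL_Sup S \<subseteq> J"
    unfolding E_def down_def by auto
next
  show "BL_Sup ((\<inter>) a ` S) \<subseteq> a \<inter> BL_Sup S"
  proof (rule BL_Sup_least)
    show "a \<inter> BL_Sup S \<in> BL"
      using a BL_Sup_in_BL by (rule Int_in_BL)
    show "s \<subseteq> a \<inter> BL_Sup S" if "s \<in> (\<inter>) a ` S" for s
      using that BL_Sup_upper by blast
  qed
qed

lemma sub_kappa_frame_BL_join_in_iff:
  assumes "sub_kappa_frame_BL k C" and "S \<subseteq> C" and "kappa_set k S"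
  shows "join_in C S X \<longleftrightarrow> X = BL_Sup S"
proof -
  have "C \<subseteq> BL" and "BL_Sup S \<in> C"
    using assms join_in_BL_Sup unfolding sub_kappa_frame_BL_def sub_meet_BL_def by blast+
  then have "join_in C S (BL_Sup S)"
    using join_in_BL_Sup join_in_subfamily by blast
  then show ?thesis
    using join_in_unique by blast
qed

lemma sub_kappa_frame_BL_imp_kappa_frame:
  assumes C: "sub_kappa_frame_BL k C"
  shows "kappa_frame k C"
  unfolding kappa_frame_def kappa_complete_def kappa_JD_def
proof (intro conjI allI impI ballI)
  fix S assume "S \<subseteq> C" "kappa_set k S"
  then show "\<exists>X. join_in C S X"
    using sub_kappa_frame_BL_join_in_iff[OF C] by blast
next
  fix S X a assume S: "S \<subseteq> C" "kappa_set k S" and X: "join_in C S X" and a: "a \<in> C"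
  have CBL: "C \<subseteq> BL"
    using C unfolding sub_kappa_frame_BL_def sub_meet_BL_def by blast
  have meet: "a \<inter> X \<in> C"
    using C a X unfolding sub_kappa_frame_BL_def sub_meet_BL_def join_in_def by blast
  have "X = BL_Sup S"
    using sub_kappa_frame_BL_join_in_iff[OF C S] X by blast
  then have "a \<inter> X = BL_Sup ((\<inter>) a ` S)"
    using BL_Int_Sup_distrib[of a S] a S(1) CBL by auto
  then have "join_in BL ((\<inter>) a ` S) (a \<inter> X)"
    by (simp add: join_in_BL_iff)
  then show "join_in C ((\<inter>) a ` S) (a \<inter> X)"
    by (rule join_in_subfamily[OF CBL _ meet])
qed

lemma is_join_elements_below:
  assumes "range down \<subseteq> B" and "join_in B ((\<inter>) (down w) ` S) (down w)"
  shows "is_join {z \<in> \<Union>S. z \<le> w} w"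
  unfolding is_join_def
proof (intro conjI allI impI ballI)
  fix v assume v: "\<forall>z\<in>{z \<in> \<Union>S. z \<le> w}. z \<le> v"
  have "down w \<subseteq> down v"
  proof (rule join_in_least[OF assms(2)])
    show "down v \<in> B"
      using assms(1) by blast
    fix s assume "s \<in> (\<inter>) (down w) ` S"
    then show "s \<subseteq> down v"
      using v unfolding down_def by auto
  qed
  then show "w \<le> v"
    by (simp add: down_subset_down_iff)
qed simp

lemma distributive_join_elements_below:
  assumes S: "S \<subseteq> BL" and joins: "\<And>c. is_join {z \<in> \<Union>S. z \<le> inf c w} (inf c w)"
  shows "distributive_join {z \<in> \<Union>S. z \<le> w} w"
  unfolding distributive_join_def
proof (intro conjI allI)
  show "is_join {z \<in> \<Union>S. z \<le> w} w"
    using joins[of w] by simp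
  fix c
  have "inf c ` {z \<in> \<Union>S. z \<le> w} = {z \<in> \<Union>S. z \<le> inf c w}"
  proof (intro equalityI subsetI)
    fix x assume "x \<in> inf c ` {z \<in> \<Union>S. z \<le> w}"
    then obtain s z where "s \<in> S" "z \<in> s" "z \<le> w" "x = inf c z"
      by blast
    moreover have "D_ideal s"
      using \<open>s \<in> S\<close> S unfolding BL_def by blast
    ultimately have "x \<in> s" and "x \<le> inf c w"
      using D_ideal_downward[of s z x] by (auto intro: le_infI2)
    then show "x \<in> {z \<in> \<Union>S. z \<le> inf c w}"
      using \<open>s \<in> S\<close> by blast
  next
    fix x assume "x \<in> {z \<in> \<Union>S. z \<le> inf c w}"
    then have "x = inf c x" and "x \<in> {z \<in> \<Union>S. z \<le> w}"
      by (simp_all add: inf_absorb2)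
    then show "x \<in> inf c ` {z \<in> \<Union>S. z \<le> w}"
      by blast
  qed
  then show "is_join (inf c ` {z \<in> \<Union>S. z \<le> w}) (inf c w)"
    using joins by simp
qed

lemma BL_Sup_eq_if_distributive_over_downs:
  assumes BL: "B \<subseteq> BL" and downs: "range down \<subseteq> B" and S: "S \<subseteq> BL"
    and Y: "join_in B S Y" and distrib: "\<And>w. join_in B ((\<inter>) (down w) ` S) (down w \<inter> Y)"
  shows "Y = BL_Sup S"
proof (rule antisym)
  have "Y \<in> BL"
    using Y BL unfolding join_in_def by blast
  then show "BL_Sup S \<subseteq> Y"
    using join_in_upper[OF Y] by (rule BL_Sup_least)
  have DY: "D_ideal Y"
    using \<open>Y \<in> BL\<close> unfolding BL_def by blast
  show "Y \<subseteq> BL_Sup S"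
  proof
    fix w assume "w \<in> Y"
    have "is_join {z \<in> \<Union>S. z \<le> inf c w} (inf c w)" for c
    proof (rule is_join_elements_below[OF downs])
      have "down (inf c w) \<inter> Y = down (inf c w)"
        using D_ideal_downward[OF DY \<open>w \<in> Y\<close>] unfolding down_def by auto
      then show "join_in B ((\<inter>) (down (inf c w)) ` S) (down (inf c w))"
        using distrib by metis
    qed
    then have "distributive_join {z \<in> \<Union>S. z \<le> w} w"
      by (rule distributive_join_elements_below[OF S])
    moreover have "{z \<in> \<Union>S. z \<le> w} \<subseteq> BL_Sup S"
      using BL_Sup_upper by blast
    moreover have "D_ideal (BL_Sup S)"
      using BL_Sup_in_BL unfolding BL_def by blast
    ultimately show "w \<in> BL_Sup S"
      using D_ideal_distributive_join by blast
  qed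
qed

lemma kappa_frame_imp_sub_kappa_frame_BL:
  assumes frame: "kappa_frame k B" and downs: "range down \<subseteq> B" and B: "sub_meet_BL B"
  shows "sub_kappa_frame_BL k B"
  unfolding sub_kappa_frame_BL_def
proof (intro conjI allI impI B)
  fix S X assume S: "S \<subseteq> B" "kappa_set k S" and X: "join_in BL S X"
  obtain Y where Y: "join_in B S Y"
    using frame S unfolding kappa_frame_def kappa_complete_def by blast
  have distrib: "join_in B ((\<inter>) a ` S) (a \<inter> Y)" if "a \<in> B" for a
    using frame S Y that unfolding kappa_frame_def kappa_JD_def by blast
  have "B \<subseteq> BL"
    using B unfolding sub_meet_BL_def by blast
  moreover have "S \<subseteq> BL"
    using S(1) \<open>B \<subseteq> BL\<close> by blast
  ultimately have "Y = BL_Sup S"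
    using downs distrib by (intro BL_Sup_eq_if_distributive_over_downs[OF _ downs _ Y]) blast+
  moreover have "X = BL_Sup S"
    using X by (simp add: join_in_BL_iff)
  moreover have "Y \<in> B"
    using Y unfolding join_in_def by blast
  ultimately show "X \<in> B"
    by simp
qed

lemma sub_kappa_frame_BL_BL: "sub_kappa_frame_BL k BL"
  unfolding sub_kappa_frame_BL_def sub_meet_BL_def
  by (simp add: UNIV_in_BL Int_in_BL join_in_def)

lemma sub_kappa_frame_BL_Inter:
  assumes "F \<noteq> {}" and F: "\<And>C. C \<in> F \<Longrightarrow> sub_kappa_frame_BL k C"
  shows "sub_kappa_frame_BL k (\<Inter>F)"
  unfolding sub_kappa_frame_BL_def sub_meet_BL_def
proof (intro conjI ballI allI impI)
  show "\<Inter>F \<subseteq> BL"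
    using assms unfolding sub_kappa_frame_BL_def sub_meet_BL_def by blast
  show "UNIV \<in> \<Inter>F"
    using F unfolding sub_kappa_frame_BL_def sub_meet_BL_def by blast
  show "x \<inter> y \<in> \<Inter>F" if "x \<in> \<Inter>F" "y \<in> \<Inter>F" for x y
    using F that unfolding sub_kappa_frame_BL_def sub_meet_BL_def by blast
  show "X \<in> \<Inter>F" if "S \<subseteq> \<Inter>F" "kappa_set k S" "join_in BL S X" for S X
  proof
    fix C assume "C \<in> F"
    then show "X \<in> C"
      using F[of C] that unfolding sub_kappa_frame_BL_def by blast
  qed
qed

lemma generated_sub_kappa_frame_eq_iff:
  assumes "B \<subseteq> BL"
  shows "generated_sub_kappa_frame k B = B \<longleftrightarrow> sub_kappa_frame_BL k B"
proof
  let ?F = "{C. B \<subseteq> C \<and> sub_kappa_frame_BL k C}"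
  assume "generated_sub_kappa_frame k B = B"
  moreover have "sub_kappa_frame_BL k (\<Inter>?F)"
    using assms sub_kappa_frame_BL_BL by (intro sub_kappa_frame_BL_Inter) blast+
  ultimately show "sub_kappa_frame_BL k B"
    unfolding generated_sub_kappa_frame_def by simp
next
  assume "sub_kappa_frame_BL k B"
  then show "generated_sub_kappa_frame k B = B"
    unfolding generated_sub_kappa_frame_def by blast
qed

theorem theorem3p7:
  fixes k :: "'c rel" and B :: "('a::{semilattice_inf, order_top}) set set"
  assumes "Cinfinite k" and "regularCard k"
    and "range down \<subseteq> B"
    and "sub_meet_BL B"
  shows "(kappa_frame k B \<longleftrightarrow> sub_kappa_frame_BL k B)
       \<and> (sub_kappa_frame_BL k B \<longleftrightarrow> generated_sub_kappa_frame k B = B)"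
proof -
  have "B \<subseteq> BL"
    using assms(4) unfolding sub_meet_BL_def by blast
  then show ?thesis
    using kappa_frame_imp_sub_kappa_frame_BL[OF _ assms(3,4)]
      sub_kappa_frame_BL_imp_kappa_frame generated_sub_kappa_frame_eq_iff
    by blast
qed

end
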